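(* Let $s,i$ be MIAs over $I$ and $O$ such that $i$ is input-enabled. If $i\ \mathbf{mioco}\ s$, then for every MIA $i'$ with $i'\sqsubseteq i$ it holds that $i'\ \mathbf{mioco}\ s$.
   Context: A Modal Interface Automaton (MIA) over disjoint alphabets $I,O$ is a tuple $(Q,I,O,\longrightarrow_\Box,\longrightarrow_\Diamond)$ with $Q$ a finite set of states and must/may transition relations $\longrightarrow_\Box,\longrightarrow_\Diamond\subseteq Q\times(I\cup O)\times Q$ such that every must transition is a may transition, and for inputs $i\in I$: must $i$-transitions are deterministic, and every may $i$-transition is a must transition. A MIA is input-enabled iff every state has an outgoing must transition for every input. MIA-refinement: $\mathcal R\subseteq P\times Q$ is a MIA-refinement iff for all $(p,q)\in\mathcal R$: (1) $q\overset{a}{\longrightarrow}_\Box q'$, $a\in I\cup O$, implies $\exists p'$: $p\overset{a}{\longrightarrow}_\Box p'$, $(p',q')\in\mathcal R$; (2) $p\overset{\alpha}{\longrightarrow}_\Diamond p'$, $\alpha\in O$, implies $\exists q'$: $q\overset{\alpha}{\longrightarrow}_\Diamond q'$, $(p',q')\in\mathcal R$; $p\sqsubseteq q$ iff some MIA-refinement contains $(p,q)$. For $\gamma\in\{\Box,\Diamond\}$: $init_\gamma(p)=\{\mu\in I\cup O\mid p\overset{\mu}{\longrightarrow}_\gamma\}$; $\delta_\Diamond(p)$ (may-quiescent) iff $init_\Box(p)\subseteq I$; $\delta_\Box(p)$ (must-quiescent) iff $init_\Diamond(p)\subseteq I$; the symbol $\delta_\gamma$ acts as a $\gamma$-self-loop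 at states $q$ with $\delta_\gamma(q)$; $p\ \mathrm{after}_\gamma\ \sigma$ is the set of states reachable from $p$ by a $\gamma$-path (including $\delta_\gamma$-loops) labeled $\sigma$ (for a set of states, the union); $Out_\gamma(P)=\{\mu\in O\mid\exists p\in P:p\overset{\mu}{\longrightarrow}_\gamma\}\cup\{\delta_\gamma\mid\exists p\in P:\delta_\gamma(p)\}$; $Straces_\gamma(p)$ is the set of words $\sigma$ over $I\cup O\cup\{\delta_\gamma\}$ with $p\overset{\sigma}{\longrightarrow}_\gamma$. For MIAs $s,i$ with $i$ input-enabled, $i\ \mathbf{mioco}\ s$ iff (1) for all $\sigma\in Straces_\Diamond(s)$: $Out_\Diamond(i\ \mathrm{after}_\Diamond\ \sigma)\subseteq Out_\Diamond(s\ \mathrm{after}_\Diamond\ \sigma)$, and (2) for all $\sigma\in Straces_\Box(i)$: $Out_\Box(s\ \mathrm{after}_\Box\ \sigma)\subseteq Out_\Box(i\ \mathrm{after}_\Box\ \sigma)$. *)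

theory Defs
  imports Main
begin

record ('s, 'a) mia =
  states :: "'s set"
  must :: "('s \<times> 'a \<times> 's) set"
  may :: "('s \<times> 'a \<times> 's) set"
  start :: 's

datatype modality = Must | May

datatype 'a lab = Act 'a | Delta

definition is_mia :: "'a set \<Rightarrow> 'a set \<Rightarrow> ('s, 'a) mia \<Rightarrow> bool" where
  "is_mia In Ou M \<longleftrightarrow>
     finite (states M) \<and> start M \<in> states M \<and>
     may M \<subseteq> states M \<times> (In \<union> Ou) \<times> states M \<and>
     must M \<subseteq> may M \<and>
     (\<forall>p i p' p''. i \<in> In \<longrightarrow> (p, i, p') \<in> must M \<longrightarrow> (p, i, p'') \<in> must M \<longrightarrow> p' = p'') \<and>
     (\<forall>p i p'. i \<in> In \<longrightarrow> (p, i, p') \<in> may M \<longrightarrow> (p, i, p') \<in> must M)"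

definition input_enabled :: "'a set \<Rightarrow> ('s, 'a) mia \<Rightarrow> bool" where
  "input_enabled In M \<longleftrightarrow> (\<forall>p \<in> states M. \<forall>i \<in> In. \<exists>p'. (p, i, p') \<in> must M)"

definition mia_refinement ::
  "'a set \<Rightarrow> 'a set \<Rightarrow> ('p, 'a) mia \<Rightarrow> ('q, 'a) mia \<Rightarrow> ('p \<times> 'q) set \<Rightarrow> bool" where
  "mia_refinement In Ou P Q R \<longleftrightarrow>
     R \<subseteq> states P \<times> states Q \<and>
     (\<forall>(p, q) \<in> R.
        (\<forall>a q'. a \<in> In \<union> Ou \<longrightarrow> (q, a, q') \<in> must Q \<longrightarrow> (\<exists>p'. (p, a, p') \<in> must P \<and> (p', q') \<in> R)) \<and>
        (\<forall>a p'. a \<in> Ou \<longrightarrow> (p, a, p') \<in> may P \<longrightarrow> (\<exists>q'. (q, a, q') \<in> may Q \<and> (p', q') \<in> R)))"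

definition refines ::
  "'a set \<Rightarrow> 'a set \<Rightarrow> ('p, 'a) mia \<Rightarrow> ('q, 'a) mia \<Rightarrow> bool" where
  "refines In Ou P Q \<longleftrightarrow> (\<exists>R. mia_refinement In Ou P Q R \<and> (start P, start Q) \<in> R)"

fun trans :: "('s, 'a) mia \<Rightarrow> modality \<Rightarrow> ('s \<times> 'a \<times> 's) set" where
  "trans M Must = must M"
| "trans M May = may M"

definition init_set :: "'a set \<Rightarrow> 'a set \<Rightarrow> ('s, 'a) mia \<Rightarrow> modality \<Rightarrow> 's \<Rightarrow> 'a set" where
  "init_set In Ou M g p = {a \<in> In \<union> Ou. \<exists>p'. (p, a, p') \<in> trans M g}"

fun quiescent :: "'a set \<Rightarrow> 'a set \<Rightarrow> ('s, 'a) mia \<Rightarrow> modality \<Rightarrow> 's \<Rightarrow> bool" where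
  "quiescent In Ou M May p = (init_set In Ou M Must p \<subseteq> In)"
| "quiescent In Ou M Must p = (init_set In Ou M May p \<subseteq> In)"

fun step_set :: "'a set \<Rightarrow> 'a set \<Rightarrow> ('s, 'a) mia \<Rightarrow> modality \<Rightarrow> 's set \<Rightarrow> 'a lab \<Rightarrow> 's set" where
  "step_set In Ou M g P (Act a) = {p'. \<exists>p \<in> P. (p, a, p') \<in> trans M g}"
| "step_set In Ou M g P Delta = {p \<in> P. quiescent In Ou M g p}"

fun after :: "'a set \<Rightarrow> 'a set \<Rightarrow> ('s, 'a) mia \<Rightarrow> modality \<Rightarrow> 's set \<Rightarrow> 'a lab list \<Rightarrow> 's set" where
  "after In Ou M g P [] = P"
| "after In Ou M g P (x # \<sigma>) = after In Ou M g (step_set In Ou M g P x) \<sigma>"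

definition straces :: "'a set \<Rightarrow> 'a set \<Rightarrow> ('s, 'a) mia \<Rightarrow> modality \<Rightarrow> 's \<Rightarrow> 'a lab list set" where
  "straces In Ou M g p = {\<sigma>. set \<sigma> \<subseteq> Act ` (In \<union> Ou) \<union> {Delta} \<and> after In Ou M g {p} \<sigma> \<noteq> {}}"

definition outs :: "'a set \<Rightarrow> 'a set \<Rightarrow> ('s, 'a) mia \<Rightarrow> modality \<Rightarrow> 's set \<Rightarrow> 'a lab set" where
  "outs In Ou M g P =
     {Act a | a. a \<in> Ou \<and> (\<exists>p \<in> P. \<exists>p'. (p, a, p') \<in> trans M g)} \<union>
     {d. d = Delta \<and> (\<exists>p \<in> P. quiescent In Ou M g p)}"

text \<open>The two mioco conditions (input-enabledness of the implementation is a standing premise,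
  stated separately).\<close>
definition mioco :: "'a set \<Rightarrow> 'a set \<Rightarrow> ('p, 'a) mia \<Rightarrow> ('q, 'a) mia \<Rightarrow> bool" where
  "mioco In Ou i s \<longleftrightarrow>
     (\<forall>\<sigma> \<in> straces In Ou s May (start s).
        outs In Ou i May (after In Ou i May {start i} \<sigma>) \<subseteq> outs In Ou s May (after In Ou s May {start s} \<sigma>)) \<and>
     (\<forall>\<sigma> \<in> straces In Ou i Must (start i).
        outs In Ou s Must (after In Ou s Must {start s} \<sigma>) \<subseteq> outs In Ou i Must (after In Ou i Must {start i} \<sigma>))"

end

theory Submission
  imports Defs
begin

text \<open>Refinement is a simulation that matches the may-behaviour of the refining MIA forward and
  the must-behaviour of the refined MIA backward; on inputs the two coincide because the refined
  implementation is input-enabled and must-input transitions are deterministic. Lifting this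
  along suspension traces gives, for every trace, inclusion of the may-outputs of i' in those of
  i, and of the must-outputs of i in those of i'. The must half of mioco additionally shows that
  every must-trace of s is one of i, so both mioco conditions pass from i to i'.\<close>

lemma after_append:
  "after In Ou M g P (xs @ ys) = after In Ou M g (after In Ou M g P xs) ys"
  by (induction xs arbitrary: P) auto

lemma after_subset_states:
  assumes "is_mia In Ou M" "P \<subseteq> states M"
  shows "after In Ou M g P xs \<subseteq> states M"
  using assms(2)
proof (induction xs arbitrary: P)
  case (Cons x xs)
  have "step_set In Ou M g P x \<subseteq> states M"
    using Cons.prems assms(1) by (cases x; cases g) (auto simp: is_mia_def)
  then show ?case using Cons.IH by simp
qed simp

lemma refinement_must_step:
  assumes "mia_refinement In Ou P Q R" "(p, q) \<in> R" "a \<in> In \<union> Ou" "(q, a, q') \<in> must Q"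
  obtains p' where "(p, a, p') \<in> must P" "(p', q') \<in> R"
  using assms unfolding mia_refinement_def by (blast dest: bspec[OF _ assms(2)])

lemma refinement_may_output_step:
  assumes "mia_refinement In Ou P Q R" "(p, q) \<in> R" "a \<in> Ou" "(p, a, p') \<in> may P"
  obtains q' where "(q, a, q') \<in> may Q" "(p', q') \<in> R"
  using assms unfolding mia_refinement_def by (blast dest: bspec[OF _ assms(2)])

lemma refinement_quiescent_may:
  assumes R: "mia_refinement In Ou P Q R" and pq: "(p, q) \<in> R" and p: "quiescent In Ou P May p"
  shows "quiescent In Ou Q May q"
proof -
  have "a \<in> In" if a: "a \<in> In \<union> Ou" and q': "(q, a, q') \<in> must Q" for a q'
  proof -
    obtain p' where "(p, a, p') \<in> must P" using refinement_must_step[OF R pq a q'] .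
    then show ?thesis using p a by (auto simp: init_set_def)
  qed
  then show ?thesis by (auto simp: init_set_def)
qed

lemma refinement_quiescent_must:
  assumes R: "mia_refinement In Ou P Q R" and pq: "(p, q) \<in> R" and q: "quiescent In Ou Q Must q"
  shows "quiescent In Ou P Must p"
proof -
  have "a \<in> In" if a: "a \<in> In \<union> Ou" and p': "(p, a, p') \<in> may P" for a p'
  proof (rule ccontr)
    assume "a \<notin> In"
    with a have "a \<in> Ou" by blast
    then obtain q' where "(q, a, q') \<in> may Q" using refinement_may_output_step[OF R pq _ p'] by blast
    then show False using q a \<open>a \<notin> In\<close> by (auto simp: init_set_def)
  qed
  then show ?thesis by (auto simp: init_set_def)
qed

lemma refinement_may_step:
  assumes mP: "is_mia In Ou P" and mQ: "is_mia In Ou Q" and ie: "input_enabled In Q"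
    and R: "mia_refinement In Ou P Q R" and pq: "(p, q) \<in> R" and p': "(p, a, p') \<in> may P"
  obtains q' where "(q, a, q') \<in> may Q" "(p', q') \<in> R"
proof (cases "a \<in> Ou")
  case True
  then show ?thesis using refinement_may_output_step[OF R pq _ p'] that by blast
next
  case False
  then have a: "a \<in> In" using mP p' by (auto simp: is_mia_def)
  have "q \<in> states Q" using R pq by (auto simp: mia_refinement_def)
  then obtain q' where q': "(q, a, q') \<in> must Q" using ie a by (auto simp: input_enabled_def)
  then obtain p'' where "(p, a, p'') \<in> must P" "(p'', q') \<in> R"
    using refinement_must_step[OF R pq] a by blast
  moreover have "(p, a, p') \<in> must P" using mP a p' by (auto simp: is_mia_def)
  ultimately have "(p', q') \<in> R" using mP a unfolding is_mia_def by blast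
  moreover have "(q, a, q') \<in> may Q" using mQ q' by (auto simp: is_mia_def)
  ultimately show ?thesis using that by blast
qed

lemma step_set_may_refinement:
  assumes mP: "is_mia In Ou P" and mQ: "is_mia In Ou Q" and ie: "input_enabled In Q"
    and R: "mia_refinement In Ou P Q R" and AB: "A \<subseteq> R\<inverse> `` B"
  shows "step_set In Ou P May A x \<subseteq> R\<inverse> `` step_set In Ou Q May B x"
proof
  fix p' assume p': "p' \<in> step_set In Ou P May A x"
  show "p' \<in> R\<inverse> `` step_set In Ou Q May B x"
  proof (cases x)
    case (Act a)
    then obtain p q where "q \<in> B" "(p, q) \<in> R" "(p, a, p') \<in> may P" using p' AB by auto
    moreover obtain q' where "(q, a, q') \<in> may Q" "(p', q') \<in> R"
      using refinement_may_step[OF mP mQ ie R calculation(2,3)] .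
    ultimately show ?thesis using Act by auto
  next
    case Delta
    then obtain q where "q \<in> B" "(p', q) \<in> R" "quiescent In Ou P May p'" using p' AB by auto
    moreover have "quiescent In Ou Q May q" using refinement_quiescent_may[OF R calculation(2,3)] .
    ultimately show ?thesis using Delta by auto
  qed
qed

lemma step_set_must_refinement:
  assumes mQ: "is_mia In Ou Q" and R: "mia_refinement In Ou P Q R" and BA: "B \<subseteq> R `` A"
  shows "step_set In Ou Q Must B x \<subseteq> R `` step_set In Ou P Must A x"
proof
  fix q' assume q': "q' \<in> step_set In Ou Q Must B x"
  show "q' \<in> R `` step_set In Ou P Must A x"
  proof (cases x)
    case (Act a)
    then obtain p q where "p \<in> A" "(p, q) \<in> R" "(q, a, q') \<in> must Q" using q' BA by auto
    moreover have "a \<in> In \<union> Ou" using mQ calculation(3) by (auto simp: is_mia_def)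
    moreover obtain p' where "(p, a, p') \<in> must P" "(p', q') \<in> R"
      using refinement_must_step[OF R calculation(2,4,3)] .
    ultimately show ?thesis using Act by auto
  next
    case Delta
    then obtain p where "p \<in> A" "(p, q') \<in> R" "quiescent In Ou Q Must q'" using q' BA by auto
    moreover have "quiescent In Ou P Must p" using refinement_quiescent_must[OF R calculation(2,3)] .
    ultimately show ?thesis using Delta by auto
  qed
qed

lemma after_may_refinement:
  assumes "is_mia In Ou P" "is_mia In Ou Q" "input_enabled In Q" "mia_refinement In Ou P Q R"
  shows "A \<subseteq> R\<inverse> `` B \<Longrightarrow> after In Ou P May A \<sigma> \<subseteq> R\<inverse> `` after In Ou Q May B \<sigma>"
  by (induction \<sigma> arbitrary: A B) (simp_all add: step_set_may_refinement[OF assms])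

lemma after_must_refinement:
  assumes "is_mia In Ou Q" "mia_refinement In Ou P Q R"
  shows "B \<subseteq> R `` A \<Longrightarrow> after In Ou Q Must B \<sigma> \<subseteq> R `` after In Ou P Must A \<sigma>"
  by (induction \<sigma> arbitrary: A B) (simp_all add: step_set_must_refinement[OF assms])

lemma outs_may_refinement:
  assumes mP: "is_mia In Ou P" and mQ: "is_mia In Ou Q" and ie: "input_enabled In Q"
    and R: "mia_refinement In Ou P Q R" and AB: "A \<subseteq> R\<inverse> `` B"
  shows "outs In Ou P May A \<subseteq> outs In Ou Q May B"
proof
  fix d assume "d \<in> outs In Ou P May A"
  then consider (act) a p p' where "d = Act a" "a \<in> Ou" "p \<in> A" "(p, a, p') \<in> may P"
    | (quiescent) p where "d = Delta" "p \<in> A" "quiescent In Ou P May p"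
    unfolding outs_def by auto
  then show "d \<in> outs In Ou Q May B"
  proof cases
    case act
    then obtain q where q: "q \<in> B" "(p, q) \<in> R" using AB by auto
    obtain q' where "(q, a, q') \<in> may Q" using refinement_may_step[OF mP mQ ie R q(2) act(4)] .
    then show ?thesis using act q unfolding outs_def by auto
  next
    case quiescent
    then obtain q where q: "q \<in> B" "(p, q) \<in> R" using AB by auto
    have "quiescent In Ou Q May q" using refinement_quiescent_may[OF R q(2) quiescent(3)] .
    then show ?thesis using quiescent q unfolding outs_def by auto
  qed
qed

lemma outs_must_refinement:
  assumes R: "mia_refinement In Ou P Q R" and BA: "B \<subseteq> R `` A"
  shows "outs In Ou Q Must B \<subseteq> outs In Ou P Must A"
proof
  fix d assume "d \<in> outs In Ou Q Must B"
  then consider (act) a q q' where "d = Act a" "a \<in> Ou" "q \<in> B" "(q, a, q') \<in> must Q"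
    | (quiescent) q where "d = Delta" "q \<in> B" "quiescent In Ou Q Must q"
    unfolding outs_def by auto
  then show "d \<in> outs In Ou P Must A"
  proof cases
    case act
    then obtain p where p: "p \<in> A" "(p, q) \<in> R" using BA by auto
    obtain p' where "(p, a, p') \<in> must P"
      using refinement_must_step[OF R p(2) _ act(4)] act(2) by blast
    then show ?thesis using act p unfolding outs_def by auto
  next
    case quiescent
    then obtain p where p: "p \<in> A" "(p, q) \<in> R" using BA by auto
    have "quiescent In Ou P Must p" using refinement_quiescent_must[OF R p(2) quiescent(3)] .
    then show ?thesis using quiescent p unfolding outs_def by auto
  qed
qed

lemma outs_after_may_refinement:
  assumes "is_mia In Ou P" "is_mia In Ou Q" "input_enabled In Q" "mia_refinement In Ou P Q R"
    and "(start P, start Q) \<in> R"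
  shows "outs In Ou P May (after In Ou P May {start P} \<sigma>)
    \<subseteq> outs In Ou Q May (after In Ou Q May {start Q} \<sigma>)"
  using assms(5)
  by (intro outs_may_refinement[OF assms(1-4)] after_may_refinement[OF assms(1-4)]) auto

lemma outs_after_must_refinement:
  assumes "is_mia In Ou Q" "mia_refinement In Ou P Q R" "(start P, start Q) \<in> R"
  shows "outs In Ou Q Must (after In Ou Q Must {start Q} \<sigma>)
    \<subseteq> outs In Ou P Must (after In Ou P Must {start P} \<sigma>)"
  using assms(3) by (intro outs_must_refinement[OF assms(2)] after_must_refinement[OF assms(1,2)]) auto

text \<open>An input step of s can be matched by i because i is input-enabled; an output or
  quiescence step because the must-outputs of s after the trace are must-outputs of i.\<close>

lemma mioco_must_straces_subset:
  assumes mi: "is_mia In Ou i" and ie: "input_enabled In i" and mc: "mioco In Ou i s"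
  shows "straces In Ou s Must (start s) \<subseteq> straces In Ou i Must (start i)"
proof -
  have "after In Ou i Must {start i} \<sigma> \<noteq> {}"
    if "set \<sigma> \<subseteq> Act ` (In \<union> Ou) \<union> {Delta}" "after In Ou s Must {start s} \<sigma> \<noteq> {}" for \<sigma>
    using that
  proof (induction \<sigma> rule: rev_induct)
    case (snoc x \<sigma>)
    let ?S = "after In Ou s Must {start s} \<sigma>" and ?I = "after In Ou i Must {start i} \<sigma>"
    have S: "step_set In Ou s Must ?S x \<noteq> {}" using snoc.prems by (simp add: after_append)
    then have "?S \<noteq> {}" by (cases x) auto
    then have I: "?I \<noteq> {}" using snoc by auto
    then have "\<sigma> \<in> straces In Ou i Must (start i)" using snoc.prems by (auto simp: straces_def)
    then have outs: "outs In Ou s Must ?S \<subseteq> outs In Ou i Must ?I" using mc by (auto simp: mioco_def)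
    have "step_set In Ou i Must ?I x \<noteq> {}"
    proof (cases x)
      case (Act a)
      then obtain r r' where r: "r \<in> ?S" "(r, a, r') \<in> must s" using S by auto
      have a: "a \<in> In \<union> Ou" using snoc.prems Act by auto
      show ?thesis
      proof (cases "a \<in> Ou")
        case True
        then have "Act a \<in> outs In Ou s Must ?S" using r unfolding outs_def by auto
        then have "Act a \<in> outs In Ou i Must ?I" using outs by auto
        then show ?thesis using Act unfolding outs_def by auto
      next
        case False
        obtain q where q: "q \<in> ?I" using I by auto
        have "q \<in> states i"
          using q after_subset_states[OF mi, of "{start i}"] mi by (auto simp: is_mia_def)
        then obtain q' where "(q, a, q') \<in> must i" using a False ie by (auto simp: input_enabled_def)
        then show ?thesis using q Act by auto
      qed
    next
      case Delta
      then have "Delta \<in> outs In Ou s Must ?S" using S unfolding outs_def by auto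
      then have "Delta \<in> outs In Ou i Must ?I" using outs by auto
      then show ?thesis using Delta unfolding outs_def by auto
    qed
    then show ?case by (simp add: after_append)
  qed simp
  then show ?thesis by (auto simp: straces_def)
qed

theorem proposition2:
  fixes In Ou :: "'a set"
    and s :: "('r, 'a) mia" and i :: "('q, 'a) mia" and i' :: "('p, 'a) mia"
  assumes "In \<inter> Ou = {}"
    and "is_mia In Ou s" and "is_mia In Ou i" and "input_enabled In i"
    and "mioco In Ou i s"
    and "is_mia In Ou i'" and "refines In Ou i' i"
  shows "mioco In Ou i' s"
proof -
  obtain R where R: "mia_refinement In Ou i' i R" and start: "(start i', start i) \<in> R"
    using assms(7) by (auto simp: refines_def)
  have "outs In Ou s Must (after In Ou s Must {start s} \<sigma>)
      \<subseteq> outs In Ou i' Must (after In Ou i' Must {start i'} \<sigma>)"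
    if "\<sigma> \<in> straces In Ou i' Must (start i')" for \<sigma>
  proof (cases "\<sigma> \<in> straces In Ou s Must (start s)")
    case True
    then have "\<sigma> \<in> straces In Ou i Must (start i)"
      using mioco_must_straces_subset[OF assms(3-5)] by blast
    then have "outs In Ou s Must (after In Ou s Must {start s} \<sigma>)
        \<subseteq> outs In Ou i Must (after In Ou i Must {start i} \<sigma>)"
      using assms(5) by (simp add: mioco_def)
    then show ?thesis using outs_after_must_refinement[OF assms(3) R start] by (rule order_trans)
  next
    case False
    then show ?thesis using that by (auto simp: straces_def outs_def)
  qed
  moreover have "outs In Ou i' May (after In Ou i' May {start i'} \<sigma>)
      \<subseteq> outs In Ou s May (after In Ou s May {start s} \<sigma>)"
    if "\<sigma> \<in> straces In Ou s May (start s)" for \<sigma>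
    using outs_after_may_refinement[OF assms(6,3,4) R start] that assms(5)
    unfolding mioco_def by (blast intro: order_trans)
  ultimately show ?thesis unfolding mioco_def by blast
qed

end
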